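(* Let $X$ and $Y$ be topological spaces, $(Z,d)$ a metric space, $f:X\times Y\to Z$ a mapping, and $\mathcal B$ a countable collection of nonempty subsets of $Y$. Suppose that for every $V\in\mathcal B$ the set-valued mapping $F^V:X\ni x\mapsto f_x(V)\in 2^Z$ is lower quasicontinuous. Then there is a residual set $R\subset X$ such that for each $a\in R$: (1) if $f_a$ is continuous at $b\in Y$ and $b$ has a neighborhood base (in $Y$) contained in $\mathcal B$, then $f$ is continuous at $(a,b)$; (2) if $f_a$ is quasicontinuous at $b\in Y$ and some neighborhood $V'$ of $b$ in $Y$ has a pseudobase (as a subspace) contained in $\mathcal B$, then $f$ is quasicontinuous with respect to the variable $x$ at $(a,b)$; (3) if $f_a$ is cliquish at $b\in Y$ and some neighborhood $V'$ of $b$ in $Y$ has a pseudobase (as a subspace) contained in $\mathcal B$, then $f$ is cliquish with respect to the variable $x$ at $(a,b)$.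
   Context: $f_x(y)=f(x,y)$; $2^Z$ is the set of nonempty subsets of $Z$. $F:X\to 2^Z$ is lower quasicontinuous if for each $x_0\in X$, each neighborhood $U$ of $x_0$ and each open $W\subset Z$ with $F(x_0)\cap W\ne\emptyset$, there is an open $O$ with $\emptyset\ne O\subset U$ and $F(x)\cap W\ne\emptyset$ for all $x\in O$. A mapping $g:Y\to Z$ is quasicontinuous at $b$ if for each neighborhood $V$ of $b$ and neighborhood $W$ of $g(b)$ there is an open $O$ with $\emptyset\ne O\subset V$ and $g(O)\subset W$; it is cliquish at $b$ if for each $\varepsilon>0$ and neighborhood $V$ of $b$ there is an open $O$ with $\emptyset\ne O\subset V$ and $\mathrm{diam}(g(O))\le\varepsilon$. $f$ is quasicontinuous with respect to the variable $x$ at $(a,b)$ if for each neighborhood $V$ of $b$ and $\varepsilon>0$ there are a neighborhood $U$ of $a$ and an open $O\subset Y$ with $\emptyset\ne O\subset V$ such that $d(f(a,b),f(x,y))\le\varepsilon$ for all $x\in U$, $y\in O$; $f$ is cliquish with respect to the variable $x$ at $(a,b)$ if for each neighborhood $V$ of $b$ and $\varepsilon>0$ there are a neighborhood $U$ of $a$ and an open $O\subset Y$ with $\emptyset\ne O\subset V$ such that $d(f(a,y),f(x,y'))\le\varepsilon$ for all $x\in U$, $y,y'\in O$. A pseudobase ($\pi$-base) of a space is a collection of nonempty open sets such that every nonempty open set contains a member of it. Residual means containing a countable intersection of dense open sets. *)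

theory Defs
  imports "HOL-Analysis.Analysis"
begin

definition nhd :: "'a::topological_space set \<Rightarrow> 'a \<Rightarrow> bool" where
  "nhd U x \<longleftrightarrow> (\<exists>G. open G \<and> x \<in> G \<and> G \<subseteq> U)"

definition residual :: "'a::topological_space set \<Rightarrow> bool" where
  "residual R \<longleftrightarrow> (\<exists>G. countable G \<and> (\<forall>g\<in>G. open g \<and> closure g = UNIV) \<and> \<Inter>G \<subseteq> R)"

definition lower_quasicont :: "('a::topological_space \<Rightarrow> 'c::topological_space set) \<Rightarrow> bool" where
  "lower_quasicont F \<longleftrightarrow>
     (\<forall>x0 U W. nhd U x0 \<and> open W \<and> F x0 \<inter> W \<noteq> {} \<longrightarrow>
        (\<exists>G. open G \<and> G \<noteq> {} \<and> G \<subseteq> U \<and> (\<forall>x\<in>G. F x \<inter> W \<noteq> {})))"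

definition quasicont_at :: "('b::topological_space \<Rightarrow> 'c::topological_space) \<Rightarrow> 'b \<Rightarrow> bool" where
  "quasicont_at g b \<longleftrightarrow>
     (\<forall>V W. nhd V b \<and> nhd W (g b) \<longrightarrow>
        (\<exists>G. open G \<and> G \<noteq> {} \<and> G \<subseteq> V \<and> g ` G \<subseteq> W))"

text \<open>Cliquishness; "diam(g(O)) \<le> \<epsilon>" is written out as a bound on all distances.\<close>
definition cliquish_at :: "('b::topological_space \<Rightarrow> 'c::metric_space) \<Rightarrow> 'b \<Rightarrow> bool" where
  "cliquish_at g b \<longleftrightarrow>
     (\<forall>\<epsilon>>0. \<forall>V. nhd V b \<longrightarrow>
        (\<exists>G. open G \<and> G \<noteq> {} \<and> G \<subseteq> V \<and> (\<forall>y\<in>G. \<forall>y'\<in>G. dist (g y) (g y') \<le> \<epsilon>)))"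

definition quasicont_wrt_x ::
  "('a::topological_space \<times> 'b::topological_space \<Rightarrow> 'c::metric_space) \<Rightarrow> 'a \<Rightarrow> 'b \<Rightarrow> bool" where
  "quasicont_wrt_x f a b \<longleftrightarrow>
     (\<forall>V \<epsilon>. nhd V b \<and> \<epsilon> > 0 \<longrightarrow>
        (\<exists>U G. nhd U a \<and> open G \<and> G \<noteq> {} \<and> G \<subseteq> V \<and>
               (\<forall>x\<in>U. \<forall>y\<in>G. dist (f (a, b)) (f (x, y)) \<le> \<epsilon>)))"

definition cliquish_wrt_x ::
  "('a::topological_space \<times> 'b::topological_space \<Rightarrow> 'c::metric_space) \<Rightarrow> 'a \<Rightarrow> 'b \<Rightarrow> bool" where
  "cliquish_wrt_x f a b \<longleftrightarrow>
     (\<forall>V \<epsilon>. nhd V b \<and> \<epsilon> > 0 \<longrightarrow>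
        (\<exists>U G. nhd U a \<and> open G \<and> G \<noteq> {} \<and> G \<subseteq> V \<and>
               (\<forall>x\<in>U. \<forall>y\<in>G. \<forall>y'\<in>G. dist (f (a, y)) (f (x, y')) \<le> \<epsilon>)))"

definition has_nhd_base_in :: "'b::topological_space \<Rightarrow> 'b set set \<Rightarrow> bool" where
  "has_nhd_base_in b B \<longleftrightarrow>
     (\<exists>N\<subseteq>B. (\<forall>V\<in>N. nhd V b) \<and> (\<forall>U. nhd U b \<longrightarrow> (\<exists>V\<in>N. V \<subseteq> U)))"

definition pseudobase_of :: "'b::topological_space set set \<Rightarrow> 'b set \<Rightarrow> bool" where
  "pseudobase_of P S \<longleftrightarrow>
     (\<forall>W\<in>P. W \<noteq> {} \<and> openin (top_of_set S) W) \<and>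
     (\<forall>W. openin (top_of_set S) W \<and> W \<noteq> {} \<longrightarrow> (\<exists>P'\<in>P. P' \<subseteq> W))"

end

theory Submission
  imports Defs
begin

(* For a set V of the y-variable and e > 0 call a point a of X
   (V,e)-stable if, whenever f_a oscillates by at most e on V, there is an open
   U containing a such that every value f(x,y), x in U, y in V, lies within 5e
   of the set f_a(V).  Lower quasicontinuity of x |-> f_x(V) forces the set of
   non-stable points to be nowhere dense: two points near each other that are
   both unstable would, by lower quasicontinuity, produce a 4e-chain between
   values that instability keeps 5e apart.  Since B is countable, the points
   that are (V,1/(n+1))-stable for all V in B and all n form a residual set R.
   At a point a of R, continuity, quasicontinuity or cliquishness of f_a at b
   provides a member V of B near b on which f_a oscillates little, and
   stability at a transfers this to all x near a, which gives (1)-(3).      *)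

lemma nhd_Int:
  assumes "nhd A b" "nhd C b"
  shows "nhd (A \<inter> C) b"
proof -
  obtain G1 where "open G1" "b \<in> G1" "G1 \<subseteq> A" using assms(1) unfolding nhd_def by blast
  moreover obtain G2 where "open G2" "b \<in> G2" "G2 \<subseteq> C" using assms(2) unfolding nhd_def by blast
  ultimately show ?thesis unfolding nhd_def by (intro exI[of _ "G1 \<inter> G2"]) auto
qed

lemma pseudobase_member_in_open:
  assumes "pseudobase_of P S" "open G" "G \<subseteq> S" "G \<noteq> {}"
  obtains W where "W \<in> P" "W \<subseteq> G" "W \<noteq> {}" "open W"
proof -
  have "openin (top_of_set S) G" unfolding openin_open using assms(2,3) by blast
  then obtain W where W: "W \<in> P" "W \<subseteq> G" using assms(1,4) unfolding pseudobase_of_def by blast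
  then have ne: "W \<noteq> {}" and "openin (top_of_set S) W" using assms(1) unfolding pseudobase_of_def by auto
  then obtain T where T: "open T" "W = S \<inter> T" unfolding openin_open by blast
  then have "W = G \<inter> T" using W(2) assms(3) by blast
  then have "open W" using T(1) assms(2) by auto
  then show ?thesis using that W ne by blast
qed

lemma open_in_interior_closure_meets:
  assumes "open G" "G \<noteq> {}" "G \<subseteq> interior (closure S)"
  shows "G \<inter> S \<noteq> {}"
  using assms interior_subset open_Int_closure_eq_empty by blast

lemma residual_complement_nowhere_dense:
  assumes "countable I" "\<And>i. i \<in> I \<Longrightarrow> interior (closure (S i)) = {}"
  shows "residual (- (\<Union>i\<in>I. S i))"
proof -
  let ?G = "(\<lambda>i. - closure (S i)) ` I"
  have "open g \<and> closure g = UNIV" if g: "g \<in> ?G" for g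
  proof -
    obtain i where "i \<in> I" "g = - closure (S i)" using g by blast
    then show ?thesis using assms(2) by (simp add: closure_complement open_Compl)
  qed
  moreover have "\<Inter> ?G \<subseteq> - (\<Union>i\<in>I. S i)" using closure_subset by blast
  moreover have "countable ?G" using assms(1) by simp
  ultimately show ?thesis unfolding residual_def by blast
qed

lemma dist_le_via_centre:
  fixes x y c :: "'c::metric_space"
  assumes "dist x c < e/2" "dist y c < e/2"
  shows "dist x y \<le> e"
  using dist_triangle2[of x y c] assms by linarith

section \<open>Stable points\<close>

definition stable_at ::
  "('a::topological_space \<times> 'b \<Rightarrow> 'c::metric_space) \<Rightarrow> 'b set \<Rightarrow> real \<Rightarrow> 'a \<Rightarrow> bool" where
  "stable_at f V e a \<longleftrightarrow>
     ((\<forall>y\<in>V. \<forall>y'\<in>V. dist (f (a, y)) (f (a, y')) \<le> e) \<longrightarrow>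
      (\<exists>U. open U \<and> a \<in> U \<and> (\<forall>x\<in>U. \<forall>y\<in>V. \<exists>y'\<in>V. dist (f (x, y)) (f (a, y')) \<le> 5 * e)))"

lemma lower_quasicont_ball:
  assumes "lower_quasicont (\<lambda>x. (\<lambda>y. f (x, y)) ` V)" "open G" "x0 \<in> G" "y0 \<in> V" "e > 0"
  obtains G' where "open G'" "G' \<noteq> {}" "G' \<subseteq> G"
    "\<forall>x\<in>G'. \<exists>y\<in>V. dist (f (x0, y0)) (f (x, y)) < e"
proof -
  have "nhd G x0" using assms(2,3) unfolding nhd_def by blast
  moreover have "(\<lambda>y. f (x0, y)) ` V \<inter> ball (f (x0, y0)) e \<noteq> {}" using assms(4,5) by auto
  ultimately obtain G' where G': "open G'" "G' \<noteq> {}" "G' \<subseteq> G"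
      and meets: "\<forall>x\<in>G'. (\<lambda>y. f (x, y)) ` V \<inter> ball (f (x0, y0)) e \<noteq> {}"
    using assms(1) open_ball unfolding lower_quasicont_def by meson
  have "\<forall>x\<in>G'. \<exists>y\<in>V. dist (f (x0, y0)) (f (x, y)) < e"
    using meets by fastforce
  then show ?thesis using that G' by blast
qed

text \<open>Otherwise a nonempty open set lies in the closure of the unstable points.  Instability
  of a point a2 there gives a value f(x2,y2) more than 5e away from f_{a2}(V); lower
  quasicontinuity near x0 and near x2 supplies an unstable a3 (so f_{a3} oscillates by at
  most e on V) and a chain of four e-steps f(x2,y2), f_{a3}(V), f(x0,y0), f_{a2}(V).\<close>
lemma unstable_nowhere_dense:
  assumes lqc: "lower_quasicont (\<lambda>x. (\<lambda>y. f (x, y)) ` V)" and "V \<noteq> {}" and e: "e > 0"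
  shows "interior (closure {a. \<not> stable_at f V e a}) = {}"
proof (rule ccontr)
  let ?N = "{a. \<not> stable_at f V e a}"
  let ?H = "interior (closure ?N)"
  assume "?H \<noteq> {}"
  then obtain x0 where x0: "x0 \<in> ?H" by blast
  obtain y0 where y0: "y0 \<in> V" using \<open>V \<noteq> {}\<close> by blast
  obtain G1 where G1: "open G1" "G1 \<noteq> {}" "G1 \<subseteq> ?H"
    and near0: "\<forall>x\<in>G1. \<exists>y\<in>V. dist (f (x0, y0)) (f (x, y)) < e"
    using lower_quasicont_ball[OF lqc open_interior x0 y0 e] by blast
  obtain a2 where a2: "a2 \<in> G1" "\<not> stable_at f V e a2"
    using open_in_interior_closure_meets[OF G1] by blast
  then obtain x2 y2 where x2: "x2 \<in> G1" "y2 \<in> V"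
    and far: "\<forall>y'\<in>V. 5 * e < dist (f (x2, y2)) (f (a2, y'))"
    using G1(1) unfolding stable_at_def by (auto simp: not_le)
  obtain G2 where G2: "open G2" "G2 \<noteq> {}" "G2 \<subseteq> G1"
    and near2: "\<forall>x\<in>G2. \<exists>y\<in>V. dist (f (x2, y2)) (f (x, y)) < e"
    using lower_quasicont_ball[OF lqc G1(1) x2 e] by blast
  obtain a3 where a3: "a3 \<in> G2" "\<not> stable_at f V e a3"
    using open_in_interior_closure_meets[OF G2(1,2)] G1(3) G2(3) by blast
  obtain w where w: "w \<in> V" "dist (f (x0, y0)) (f (a2, w)) < e" using near0 a2(1) by blast
  obtain p where p: "p \<in> V" "dist (f (x0, y0)) (f (a3, p)) < e" using near0 a3(1) G2(3) by blast
  obtain q where q: "q \<in> V" "dist (f (x2, y2)) (f (a3, q)) < e" using near2 a3(1) by blast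
  have pq: "dist (f (a3, q)) (f (a3, p)) \<le> e" using a3(2) p(1) q(1) unfolding stable_at_def by blast
  have "dist (f (x2, y2)) (f (a2, w)) \<le> dist (f (x2, y2)) (f (a3, q)) + dist (f (a3, q)) (f (a3, p))
      + dist (f (a3, p)) (f (x0, y0)) + dist (f (x0, y0)) (f (a2, w))"
    using dist_triangle[of "f (x2, y2)" "f (a2, w)" "f (a3, q)"]
      dist_triangle[of "f (a3, q)" "f (a2, w)" "f (a3, p)"]
      dist_triangle[of "f (a3, p)" "f (a2, w)" "f (x0, y0)"] by linarith
  also have "\<dots> < 4 * e" using q pq p w by (simp add: dist_commute)
  finally show False using far w(1) e by fastforce
qed

definition stable_for :: "('a::topological_space \<times> 'b \<Rightarrow> 'c::metric_space) \<Rightarrow> 'b set set \<Rightarrow> 'a \<Rightarrow> bool" where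
  "stable_for f B a \<longleftrightarrow> (\<forall>V\<in>B. \<forall>n. stable_at f V (inverse (real (Suc n))) a)"

lemma residual_stable_points:
  assumes "countable B" "\<forall>V\<in>B. V \<noteq> {}" "\<forall>V\<in>B. lower_quasicont (\<lambda>x. (\<lambda>y. f (x, y)) ` V)"
  shows "residual {a. stable_for f B a}"
proof -
  let ?S = "\<lambda>(V, n). {a. \<not> stable_at f V (inverse (real (Suc n))) a}"
  have "residual (- (\<Union>i\<in>B \<times> UNIV. ?S i))"
  proof (rule residual_complement_nowhere_dense)
    show "countable (B \<times> (UNIV :: nat set))" using assms(1) by simp
    show "interior (closure (?S i)) = {}" if i: "i \<in> B \<times> UNIV" for i
    proof -
      obtain V n where "i = (V, n)" "V \<in> B" using i by blast
      then show ?thesis using assms(2,3) unstable_nowhere_dense[of f V] by simp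
    qed
  qed
  moreover have "- (\<Union>i\<in>B \<times> UNIV. ?S i) = {a. stable_for f B a}"
    unfolding stable_for_def by auto
  ultimately show ?thesis by simp
qed

lemma stable_for_small:
  assumes "stable_for f B a" "\<epsilon> > 0"
  obtains e where "e > 0" "e \<le> \<epsilon>" "\<And>V. V \<in> B \<Longrightarrow> stable_at f V e a"
proof -
  obtain n where "inverse (real (Suc n)) < \<epsilon>" using assms(2) reals_Archimedean by blast
  then show ?thesis using that[of "inverse (real (Suc n))"] assms(1) unfolding stable_for_def by auto
qed

lemma stable_atE:
  assumes "stable_at f V e a" "\<forall>y\<in>V. \<forall>y'\<in>V. dist (f (a, y)) (f (a, y')) \<le> e"
  obtains U where "open U" "a \<in> U" "\<forall>x\<in>U. \<forall>y\<in>V. \<exists>y'\<in>V. dist (f (x, y)) (f (a, y')) \<le> 5 * e"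
  using assms unfolding stable_at_def by blast

section \<open>The three transfer properties at stable points\<close>

lemma stable_continuous:
  fixes f :: "'a::topological_space \<times> 'b::topological_space \<Rightarrow> 'c::metric_space"
  assumes stable: "stable_for f B a" and cont: "((\<lambda>y. f (a, y)) \<longlongrightarrow> f (a, b)) (at b)"
    and base: "has_nhd_base_in b B"
  shows "(f \<longlongrightarrow> f (a, b)) (at (a, b))"
proof (rule tendstoI)
  fix \<epsilon> :: real assume "\<epsilon> > 0"
  then obtain e where e: "e > 0" "e \<le> \<epsilon>/7" and st: "\<And>V. V \<in> B \<Longrightarrow> stable_at f V e a"
    using stable_for_small[OF stable, of "\<epsilon>/7"] by auto
  have "eventually (\<lambda>y. dist (f (a, y)) (f (a, b)) < e/2) (at b)"
    using e(1) by (intro tendstoD[OF cont]) simp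
  then obtain S where S: "open S" "b \<in> S" and "\<forall>y\<in>S. y \<noteq> b \<longrightarrow> dist (f (a, y)) (f (a, b)) < e/2"
    unfolding eventually_at_topological by blast
  then have close: "\<forall>y\<in>S. dist (f (a, y)) (f (a, b)) < e/2" using e(1) by auto
  have "nhd S b" using S unfolding nhd_def by blast
  then obtain V where V: "V \<in> B" "nhd V b" "V \<subseteq> S" using base unfolding has_nhd_base_in_def by blast
  have "\<forall>y\<in>V. \<forall>y'\<in>V. dist (f (a, y)) (f (a, y')) \<le> e"
    using close V(3) dist_le_via_centre by (metis subsetD)
  then obtain U where U: "open U" "a \<in> U" "\<forall>x\<in>U. \<forall>y\<in>V. \<exists>y'\<in>V. dist (f (x, y)) (f (a, y')) \<le> 5 * e"
    using stable_atE[OF st[OF V(1)]] by blast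
  obtain G where G: "open G" "b \<in> G" "G \<subseteq> V" using V(2) unfolding nhd_def by blast
  have "dist (f p) (f (a, b)) < \<epsilon>" if p: "p \<in> U \<times> G" for p
  proof -
    obtain x y where xy: "p = (x, y)" "x \<in> U" "y \<in> V" using p G(3) by blast
    then obtain y' where y': "y' \<in> V" "dist (f (x, y)) (f (a, y')) \<le> 5 * e" using U(3) by blast
    then have "dist (f (a, y')) (f (a, b)) < e/2" using close V(3) by blast
    then show ?thesis using dist_triangle[of "f (x, y)" "f (a, b)" "f (a, y')"] xy(1) y'(2) e by simp
  qed
  moreover have "open (U \<times> G)" "(a, b) \<in> U \<times> G" using U G by (auto simp: open_Times)
  ultimately show "eventually (\<lambda>p. dist (f p) (f (a, b)) < \<epsilon>) (at (a, b))"
    unfolding eventually_at_topological by blast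
qed

lemma stable_pseudobase_step:
  assumes st: "\<And>V. V \<in> B \<Longrightarrow> stable_at f V e a" and PB: "P \<subseteq> B" "pseudobase_of P V'"
    and G0: "open G0" "G0 \<noteq> {}" "G0 \<subseteq> V'"
    and osc: "\<forall>y\<in>G0. \<forall>y'\<in>G0. dist (f (a, y)) (f (a, y')) \<le> e"
  obtains U W where "nhd U a" "open W" "W \<noteq> {}" "W \<subseteq> G0"
    "\<forall>x\<in>U. \<forall>y\<in>W. \<exists>y'\<in>W. dist (f (x, y)) (f (a, y')) \<le> 5 * e"
proof -
  obtain W where W: "W \<in> P" "W \<subseteq> G0" "W \<noteq> {}" "open W"
    using pseudobase_member_in_open[OF PB(2) G0(1,3,2)] by blast
  have "\<forall>y\<in>W. \<forall>y'\<in>W. dist (f (a, y)) (f (a, y')) \<le> e" using osc W(2) by blast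
  then obtain U where "open U" "a \<in> U" "\<forall>x\<in>U. \<forall>y\<in>W. \<exists>y'\<in>W. dist (f (x, y)) (f (a, y')) \<le> 5 * e"
    using stable_atE[OF st] W(1) PB(1) by blast
  then show ?thesis using that W unfolding nhd_def by blast
qed

lemma stable_quasicont:
  fixes f :: "'a::topological_space \<times> 'b::topological_space \<Rightarrow> 'c::metric_space"
  assumes stable: "stable_for f B a" and qc: "quasicont_at (\<lambda>y. f (a, y)) b"
    and V': "nhd V' b" "P \<subseteq> B" "pseudobase_of P V'"
  shows "quasicont_wrt_x f a b"
  unfolding quasicont_wrt_x_def
proof (intro allI impI, elim conjE)
  fix V and \<epsilon> :: real assume V: "nhd V b" and "\<epsilon> > 0"
  then obtain e where e: "e > 0" "e \<le> \<epsilon>/7" and st: "\<And>V. V \<in> B \<Longrightarrow> stable_at f V e a"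
    using stable_for_small[OF stable, of "\<epsilon>/7"] by auto
  have "nhd (ball (f (a, b)) (e/2)) (f (a, b))" unfolding nhd_def using e(1)
    by (intro exI[of _ "ball (f (a, b)) (e/2)"]) auto
  then obtain G0 where G0: "open G0" "G0 \<noteq> {}" "G0 \<subseteq> V \<inter> V'"
      and img: "(\<lambda>y. f (a, y)) ` G0 \<subseteq> ball (f (a, b)) (e/2)"
    using qc nhd_Int[OF V V'(1)] unfolding quasicont_at_def by blast
  have close: "dist (f (a, y)) (f (a, b)) < e/2" if "y \<in> G0" for y
    using img that by (auto simp: dist_commute)
  have "\<forall>y\<in>G0. \<forall>y'\<in>G0. dist (f (a, y)) (f (a, y')) \<le> e"
    using close dist_le_via_centre by metis
  then obtain U W where U: "nhd U a" "open W" "W \<noteq> {}" "W \<subseteq> G0"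
      and ctrl: "\<forall>x\<in>U. \<forall>y\<in>W. \<exists>y'\<in>W. dist (f (x, y)) (f (a, y')) \<le> 5 * e"
    using stable_pseudobase_step[OF st V'(2,3) G0(1,2)] G0(3) by (metis le_infE)
  have "\<forall>x\<in>U. \<forall>y\<in>W. dist (f (a, b)) (f (x, y)) \<le> \<epsilon>"
  proof (intro ballI)
    fix x y assume "x \<in> U" "y \<in> W"
    then obtain y' where y': "y' \<in> W" "dist (f (x, y)) (f (a, y')) \<le> 5 * e" using ctrl by blast
    then have "dist (f (a, y')) (f (a, b)) < e/2" using close U(4) by blast
    then show "dist (f (a, b)) (f (x, y)) \<le> \<epsilon>"
      using dist_triangle3[of "f (a, b)" "f (x, y)" "f (a, y')"] y'(2) e by (simp add: dist_commute)
  qed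
  moreover have "W \<subseteq> V" using U(4) G0(3) by blast
  ultimately show "\<exists>U G. nhd U a \<and> open G \<and> G \<noteq> {} \<and> G \<subseteq> V \<and>
               (\<forall>x\<in>U. \<forall>y\<in>G. dist (f (a, b)) (f (x, y)) \<le> \<epsilon>)"
    using U(1-3) by blast
qed

lemma stable_cliquish:
  fixes f :: "'a::topological_space \<times> 'b::topological_space \<Rightarrow> 'c::metric_space"
  assumes stable: "stable_for f B a" and cq: "cliquish_at (\<lambda>y. f (a, y)) b"
    and V': "nhd V' b" "P \<subseteq> B" "pseudobase_of P V'"
  shows "cliquish_wrt_x f a b"
  unfolding cliquish_wrt_x_def
proof (intro allI impI, elim conjE)
  fix V and \<epsilon> :: real assume V: "nhd V b" and "\<epsilon> > 0"
  then obtain e where e: "e > 0" "e \<le> \<epsilon>/7" and st: "\<And>V. V \<in> B \<Longrightarrow> stable_at f V e a"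
    using stable_for_small[OF stable, of "\<epsilon>/7"] by auto
  obtain G0 where G0: "open G0" "G0 \<noteq> {}" "G0 \<subseteq> V \<inter> V'"
      and osc: "\<forall>y\<in>G0. \<forall>y'\<in>G0. dist (f (a, y)) (f (a, y')) \<le> e"
    using cq e(1) nhd_Int[OF V V'(1)] unfolding cliquish_at_def by meson
  then obtain U W where U: "nhd U a" "open W" "W \<noteq> {}" "W \<subseteq> G0"
      and ctrl: "\<forall>x\<in>U. \<forall>y\<in>W. \<exists>y'\<in>W. dist (f (x, y)) (f (a, y')) \<le> 5 * e"
    using stable_pseudobase_step[OF st V'(2,3) G0(1,2)] by (metis le_infE)
  have "\<forall>x\<in>U. \<forall>y\<in>W. \<forall>y'\<in>W. dist (f (a, y)) (f (x, y')) \<le> \<epsilon>"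
  proof (intro ballI)
    fix x y y' assume xy: "x \<in> U" "y \<in> W" "y' \<in> W"
    then obtain w where w: "w \<in> W" "dist (f (x, y')) (f (a, w)) \<le> 5 * e" using ctrl by blast
    have "dist (f (a, y)) (f (a, w)) \<le> e" using osc U(4) w(1) xy(2) by blast
    then show "dist (f (a, y)) (f (x, y')) \<le> \<epsilon>"
      using dist_triangle2[of "f (a, y)" "f (x, y')" "f (a, w)"] w(2) e by linarith
  qed
  moreover have "W \<subseteq> V" using U(4) G0(3) by blast
  ultimately show "\<exists>U G. nhd U a \<and> open G \<and> G \<noteq> {} \<and> G \<subseteq> V \<and>
               (\<forall>x\<in>U. \<forall>y\<in>G. \<forall>y'\<in>G. dist (f (a, y)) (f (x, y')) \<le> \<epsilon>)"
    using U(1-3) by blast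
qed

theorem theorem3p3:
  fixes f :: "'a::topological_space \<times> 'b::topological_space \<Rightarrow> 'c::metric_space"
    and B :: "'b set set"
  assumes "countable B"
    and "\<forall>V\<in>B. V \<noteq> {}"
    and "\<forall>V\<in>B. lower_quasicont (\<lambda>x. (\<lambda>y. f (x, y)) ` V)"
  shows "\<exists>R. residual R \<and>
    (\<forall>a\<in>R.
      (\<forall>b. ((\<lambda>y. f (a, y)) \<longlongrightarrow> f (a, b)) (at b) \<and> has_nhd_base_in b B \<longrightarrow> (f \<longlongrightarrow> f (a, b)) (at (a, b))) \<and>
      (\<forall>b. quasicont_at (\<lambda>y. f (a, y)) b \<and>
           (\<exists>V' P. nhd V' b \<and> P \<subseteq> B \<and> pseudobase_of P V') \<longrightarrow> quasicont_wrt_x f a b) \<and>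
      (\<forall>b. cliquish_at (\<lambda>y. f (a, y)) b \<and>
           (\<exists>V' P. nhd V' b \<and> P \<subseteq> B \<and> pseudobase_of P V') \<longrightarrow> cliquish_wrt_x f a b))"
proof (intro exI[of _ "{a. stable_for f B a}"] conjI ballI allI impI)
  show "residual {a. stable_for f B a}" using residual_stable_points[OF assms] .
next
  fix a b assume "a \<in> {a. stable_for f B a}"
    and "((\<lambda>y. f (a, y)) \<longlongrightarrow> f (a, b)) (at b) \<and> has_nhd_base_in b B"
  then show "(f \<longlongrightarrow> f (a, b)) (at (a, b))" using stable_continuous by blast
next
  fix a b assume "a \<in> {a. stable_for f B a}"
    and "quasicont_at (\<lambda>y. f (a, y)) b \<and> (\<exists>V' P. nhd V' b \<and> P \<subseteq> B \<and> pseudobase_of P V')"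
  then show "quasicont_wrt_x f a b" using stable_quasicont by blast
next
  fix a b assume "a \<in> {a. stable_for f B a}"
    and "cliquish_at (\<lambda>y. f (a, y)) b \<and> (\<exists>V' P. nhd V' b \<and> P \<subseteq> B \<and> pseudobase_of P V')"
  then show "cliquish_wrt_x f a b" using stable_cliquish by blast
qed

end
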